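(* Let $R$ be an abelian ring (an associative ring with identity in which every idempotent is central). Then $R$ is weakly $r$-clean if and only if $R$ is a weakly exchange ring.
   Context: For a ring $R$ with identity, $Idem(R)$ denotes its idempotents and $Reg(R)=\{r\in R:\ r=ryr \text{ for some } y\in R\}$ its regular elements. An element $x\in R$ is weakly $r$-clean if $x=r+e$ or $x=r-e$ for some $r\in Reg(R)$, $e\in Idem(R)$; $R$ is weakly $r$-clean if all its elements are. A ring $R$ is a weakly exchange ring if for every $x\in R$ there is an idempotent $e\in xR$ such that $1-e\in(1-x)R$ or $1-e\in(1+x)R$. *)

theory Defs
  imports Main
begin

definition Idem :: "'a::ring_1 set" where
  "Idem = {e. e * e = e}"

definition Reg :: "'a::ring_1 set" where
  "Reg = {r. \<exists>y. r = r * y * r}"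

definition abelian_ring :: "'a::ring_1 itself \<Rightarrow> bool" where
  "abelian_ring _ \<longleftrightarrow> (\<forall>e::'a. e \<in> Idem \<longrightarrow> (\<forall>x::'a. e * x = x * e))"

definition weakly_r_clean_elem :: "'a::ring_1 \<Rightarrow> bool" where
  "weakly_r_clean_elem x \<longleftrightarrow>
     (\<exists>r e. r \<in> Reg \<and> e \<in> Idem \<and> (x = r + e \<or> x = r - e))"

definition weakly_r_clean :: "'a::ring_1 itself \<Rightarrow> bool" where
  "weakly_r_clean _ \<longleftrightarrow> (\<forall>x::'a. weakly_r_clean_elem x)"

definition weakly_exchange :: "'a::ring_1 itself \<Rightarrow> bool" where
  "weakly_exchange _ \<longleftrightarrow>
     (\<forall>x::'a. \<exists>e. e \<in> Idem \<and> (\<exists>s. e = x * s) \<and>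
        ((\<exists>t. 1 - e = (1 - x) * t) \<or> (\<exists>t. 1 - e = (1 + x) * t)))"

end

theory Submission
  imports Defs
begin

text \<open>In an abelian ring every regular element r = r y r commutes with its inner inverse, so
  e = r y is a central idempotent with e r = r. If x = r + g with g idempotent, then
  E = e(1 - g) + (1 - e) g is an idempotent with E \<in> xR and 1 - E \<in> (1 - x)R. Conversely, if
  e = x s is idempotent and 1 - e = (1 - x) t, then x - (1 - e) has the right inverse
  s e - t (1 - e), hence is regular, and x = (x - (1 - e)) + (1 - e). The cases r - g and
  (1 + x)R are reduced to these by replacing x with -x.\<close>

definition weakly_exchange_elem :: "'a::ring_1 \<Rightarrow> bool" where
  "weakly_exchange_elem x \<longleftrightarrow>
     (\<exists>e. e \<in> Idem \<and> (\<exists>s. e = x * s) \<and>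
        ((\<exists>t. 1 - e = (1 - x) * t) \<or> (\<exists>t. 1 - e = (1 + x) * t)))"

lemma weakly_exchange_iff_all_elems:
  "weakly_exchange TYPE('a::ring_1) \<longleftrightarrow> (\<forall>x::'a. weakly_exchange_elem x)"
  unfolding weakly_exchange_def weakly_exchange_elem_def ..

lemma Idem_iff: "e \<in> Idem \<longleftrightarrow> e * e = e"
  unfolding Idem_def by simp

lemma one_minus_Idem: "e \<in> Idem \<Longrightarrow> 1 - e \<in> Idem"
  unfolding Idem_iff by (simp add: algebra_simps)

lemma Reg_uminus:
  assumes "r \<in> Reg" shows "- r \<in> Reg"
proof -
  from assms obtain y where "r * y * r = r" unfolding Reg_def by (auto dest: sym)
  then have "- r = - r * - y * - r" by simp
  then show ?thesis unfolding Reg_def by blast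
qed

lemma Reg_if_right_inverse:
  assumes "u * v = 1" shows "u \<in> Reg"
proof -
  have "u = u * v * u" using assms by simp
  then show ?thesis unfolding Reg_def by blast
qed

lemma abelian_ring_idem_commute:
  "abelian_ring TYPE('a::ring_1) \<Longrightarrow> (e::'a) * e = e \<Longrightarrow> e * x = x * e"
  unfolding abelian_ring_def Idem_def by blast

lemma weakly_r_clean_elem_uminus: "weakly_r_clean_elem (- x) \<longleftrightarrow> weakly_r_clean_elem x"
proof -
  have "weakly_r_clean_elem (- x)" if "weakly_r_clean_elem x" for x :: 'a
  proof -
    from that obtain r e where "r \<in> Reg" "e \<in> Idem" "x = r + e \<or> x = r - e"
      unfolding weakly_r_clean_elem_def by blast
    then have "- r \<in> Reg" "e \<in> Idem" "- x = - r - e \<or> - x = - r + e"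
      by (auto simp: Reg_uminus)
    then show ?thesis
      unfolding weakly_r_clean_elem_def by blast
  qed
  from this[of x] this[of "- x"] show ?thesis by auto
qed

lemma weakly_exchange_elem_uminus: "weakly_exchange_elem (- x) \<longleftrightarrow> weakly_exchange_elem x"
proof -
  have xR: "(\<exists>s. e = - x * s) \<longleftrightarrow> (\<exists>s. e = x * s)" for e
    by (metis minus_minus mult_minus_left mult_minus_right)
  show ?thesis
    unfolding weakly_exchange_elem_def xR by auto
qed

lemma regular_inner_inverse_commute:
  fixes r y :: "'a::ring_1"
  assumes ab: "abelian_ring TYPE('a)" and r: "r = r * y * r"
  shows "r * y = y * r"
proof -
  have "(r * y) * (r * y) = r * y" "(y * r) * (y * r) = y * r"
    by (metis mult.assoc r)+
  then have c1: "(r * y) * a = a * (r * y)" and c2: "(y * r) * a = a * (y * r)" for a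
    using abelian_ring_idem_commute[OF ab] by blast+
  have "r * y = (r * y * r) * y" using r by simp
  also have "\<dots> = (y * r) * (r * y)" by (metis c2 mult.assoc)
  also have "\<dots> = (r * y) * (y * r)" by (rule c1[symmetric])
  also have "\<dots> = y * (r * y * r)" by (metis c1 mult.assoc)
  also have "\<dots> = y * r" using r by simp
  finally show ?thesis .
qed

lemma weakly_exchange_elem_regular_plus_idem:
  fixes r g :: "'a::ring_1"
  assumes ab: "abelian_ring TYPE('a)" and r: "r \<in> Reg" and g: "g \<in> Idem"
  shows "weakly_exchange_elem (r + g)"
proof -
  from r obtain y where ryr: "r = r * y * r" unfolding Reg_def by blast
  define e where "e = r * y"
  define E where "E = e * (1 - g) + (1 - e) * g"
  have gg: "g * g = g" using g by (simp add: Idem_iff)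
  have ry: "r * y = e" using e_def by simp
  have yr: "y * r = e" using regular_inner_inverse_commute[OF ab ryr] e_def by simp
  have ee: "e * e = e" by (metis e_def mult.assoc ryr)
  have er: "e * r = r" "r * e = r" using ryr yr e_def by (simp_all add: mult.assoc)
  have eg: "g * e = e * g" using abelian_ring_idem_commute[OF ab gg] by simp
  have gr: "r * g = g * r" "y * g = g * y"
    using abelian_ring_idem_commute[OF ab gg] by simp_all
  \<comment> \<open>left-nested forms of the above, so that the simplifier can use them under associativity\<close>
  have "g * (e * a) = e * (g * a)" "e * (e * a) = e * a" "g * (g * a) = g * a"
    "e * (r * a) = r * a" "r * (e * a) = r * a" "r * (g * a) = g * (r * a)"
    "y * (g * a) = g * (y * a)" "r * (y * a) = e * a" for a
    by (metis eg ee gg er gr ry mult.assoc)+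
  note rules = algebra_simps this ee er eg gr ry gg
  have "E * E = E" unfolding E_def by (simp add: rules)
  moreover have "E = (r + g) * (y * (1 - g) + (1 - e) * g)" unfolding E_def by (simp add: rules)
  moreover have "1 - E = (1 - (r + g)) * (- (y * g) + (1 - e) * (1 - g))"
    unfolding E_def by (simp add: rules)
  ultimately show ?thesis
    unfolding weakly_exchange_elem_def Idem_iff by blast
qed

lemma weakly_exchange_elem_if_weakly_r_clean_elem:
  assumes ab: "abelian_ring TYPE('a::ring_1)" and x: "weakly_r_clean_elem (x::'a)"
  shows "weakly_exchange_elem x"
proof -
  from x obtain r g where r: "r \<in> Reg" and g: "g \<in> Idem" and "x = r + g \<or> x = r - g"
    unfolding weakly_r_clean_elem_def by blast
  then consider "x = r + g" | "- x = - r + g" by auto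
  then show ?thesis
  proof cases
    case 1
    then show ?thesis using weakly_exchange_elem_regular_plus_idem[OF ab r g] by simp
  next
    case 2
    then have "weakly_exchange_elem (- x)"
      using weakly_exchange_elem_regular_plus_idem[OF ab Reg_uminus[OF r] g] by simp
    then show ?thesis by (simp add: weakly_exchange_elem_uminus)
  qed
qed

lemma exchange_data_right_inverse:
  fixes x s t e :: "'a::ring_1"
  assumes ab: "abelian_ring TYPE('a)" and ee: "e * e = e"
    and xs: "x * s = e" and xt: "1 - e = (1 - x) * t"
  shows "(x - (1 - e)) * (s * e - t * (1 - e)) = 1"
proof -
  have c: "e * a = a * e" for a using abelian_ring_idem_commute[OF ab ee] .
  have xt': "x * t = t - 1 + e" using xt by (simp add: algebra_simps)
  have "x * (s * a) = e * a" "e * (e * a) = e * a" "x * (e * a) = e * (x * a)"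
    "s * (e * a) = e * (s * a)" "t * (e * a) = e * (t * a)" for a
    by (metis xs ee c mult.assoc)+
  moreover have "x * (t * a) = t * a - a + e * a" for a
    by (metis xt' mult.assoc left_diff_distrib distrib_right mult_1_left)
  moreover have "x * e = e * x" "s * e = e * s" "t * e = e * t" using c by simp_all
  ultimately show ?thesis by (simp add: algebra_simps ee xs xt')
qed

lemma weakly_r_clean_elem_if_exchange_data:
  assumes ab: "abelian_ring TYPE('a::ring_1)" and e: "(e::'a) \<in> Idem"
    and "e = x * s" and "1 - e = (1 - x) * t"
  shows "weakly_r_clean_elem x"
proof -
  have "x - (1 - e) \<in> Reg"
    using assms exchange_data_right_inverse Reg_if_right_inverse by (metis Idem_iff)
  moreover have "x = (x - (1 - e)) + (1 - e)" by simp
  ultimately show ?thesis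
    using one_minus_Idem[OF e] unfolding weakly_r_clean_elem_def by blast
qed

lemma weakly_r_clean_elem_if_weakly_exchange_elem:
  assumes ab: "abelian_ring TYPE('a::ring_1)" and x: "weakly_exchange_elem (x::'a)"
  shows "weakly_r_clean_elem x"
proof -
  from x obtain e s where e: "e \<in> Idem" and es: "e = x * s"
    and "(\<exists>t. 1 - e = (1 - x) * t) \<or> (\<exists>t. 1 - e = (1 + x) * t)"
    unfolding weakly_exchange_elem_def by blast
  then obtain t where "1 - e = (1 - x) * t \<or> 1 - e = (1 - - x) * t" by auto
  then show ?thesis
  proof
    assume "1 - e = (1 - x) * t"
    then show ?thesis using weakly_r_clean_elem_if_exchange_data[OF ab e es] by blast
  next
    assume "1 - e = (1 - - x) * t"
    moreover have "e = - x * - s" using es by simp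
    ultimately have "weakly_r_clean_elem (- x)"
      using weakly_r_clean_elem_if_exchange_data[OF ab e] by blast
    then show ?thesis by (simp add: weakly_r_clean_elem_uminus)
  qed
qed

theorem theorem2p11:
  assumes "abelian_ring TYPE('a::ring_1)"
  shows "weakly_r_clean TYPE('a) \<longleftrightarrow> weakly_exchange TYPE('a)"
  unfolding weakly_r_clean_def weakly_exchange_iff_all_elems
  using weakly_exchange_elem_if_weakly_r_clean_elem[OF assms]
    weakly_r_clean_elem_if_weakly_exchange_elem[OF assms]
  by blast

end
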